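(* Let $N=[n]$, let $v:2^N\to\mathbb{R}_+$ be a monotone valuation with $v(\emptyset)=0$, and let $X$ be a decision map for $v$. Let $p\in\mathbb{R}^n_+$ and $S=X(p)$. If (1) for every $i\in S$ there exists $T\subseteq N$ with $i\notin T$ and $v(S)-p(S)=v(T)-p(T)$, and (2) for every $i\notin S$ and every $T\subseteq N$ with $i\in T$, $v(S)-p(S)\ge v(T)-p(T\setminus\{i\})$, then $p$ is a pure Nash equilibrium of the pricing game defined by $v$ and $X$. Moreover, if $X$ is maximal, then $p$ is a pure Nash equilibrium if and only if (1) and (2) hold.
   Context: Pricing game: $N=[n]$ is a set of services, service $i$ controlled by seller $i$. A buyer has valuation $v:2^N\to\mathbb{R}_+$, monotone ($v(S)\le v(T)$ for $S\subseteq T$) with $v(\emptyset)=0$. For $p\in\mathbb{R}^n_+$ and $S\subseteq N$, $p(S)=\sum_{j\in S}p_j$. The demand correspondence is $D(v;p)=\arg\max_{S\subseteq N}\,(v(S)-p(S))$. A decision map is a function $X:\mathbb{R}^n_+\to 2^N$ with $X(p)\in D(v;p)$ for all $p$; it is maximal if for every $p$ there is no $S'\in D(v;p)$ with $X(p)\subsetneq S'$. Each seller $i$ chooses a price $p_i\in\mathbb{R}_+$ and has utility $u_i(p)=p_i\cdot\mathbf{1}\{i\in X(p)\}$. A price vector $p$ is a pure Nash equilibrium if $u_i(p)\ge u_i(p_i',p_{-i})$ for every seller $i$ and every $p_i'\in\mathbb{R}_+$. *)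

theory Defs
  imports Complex_Main
begin

text \<open>Services are the elements of a finite type 'n (so N = UNIV, |N| = CARD('n)).
  Price vectors are functions 'n \<Rightarrow> real; they lie in R^n_+ when all entries are nonnegative.\<close>

definition valuation :: "('n set \<Rightarrow> real) \<Rightarrow> bool" where
  "valuation v \<longleftrightarrow> v {} = 0 \<and> (\<forall>S. 0 \<le> v S) \<and> (\<forall>S T. S \<subseteq> T \<longrightarrow> v S \<le> v T)"

definition nonneg_prices :: "('n \<Rightarrow> real) \<Rightarrow> bool" where
  "nonneg_prices p \<longleftrightarrow> (\<forall>i. 0 \<le> p i)"

definition psum :: "('n \<Rightarrow> real) \<Rightarrow> 'n set \<Rightarrow> real" where
  "psum p S = (\<Sum>j\<in>S. p j)"

definition demand :: "('n set \<Rightarrow> real) \<Rightarrow> ('n \<Rightarrow> real) \<Rightarrow> 'n set set" where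
  "demand v p = {S. \<forall>T. v T - psum p T \<le> v S - psum p S}"

definition decision_map :: "('n set \<Rightarrow> real) \<Rightarrow> (('n \<Rightarrow> real) \<Rightarrow> 'n set) \<Rightarrow> bool" where
  "decision_map v X \<longleftrightarrow> (\<forall>p. nonneg_prices p \<longrightarrow> X p \<in> demand v p)"

definition maximal_decision_map :: "('n set \<Rightarrow> real) \<Rightarrow> (('n \<Rightarrow> real) \<Rightarrow> 'n set) \<Rightarrow> bool" where
  "maximal_decision_map v X \<longleftrightarrow> decision_map v X \<and>
     (\<forall>p. nonneg_prices p \<longrightarrow> \<not> (\<exists>S'\<in>demand v p. X p \<subset> S'))"

definition seller_utility :: "(('n \<Rightarrow> real) \<Rightarrow> 'n set) \<Rightarrow> ('n \<Rightarrow> real) \<Rightarrow> 'n \<Rightarrow> real" where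
  "seller_utility X p i = (if i \<in> X p then p i else 0)"

definition pure_nash :: "(('n \<Rightarrow> real) \<Rightarrow> 'n set) \<Rightarrow> ('n \<Rightarrow> real) \<Rightarrow> bool" where
  "pure_nash X p \<longleftrightarrow> nonneg_prices p \<and>
     (\<forall>i q. 0 \<le> q \<longrightarrow> seller_utility X (p(i := q)) i \<le> seller_utility X p i)"

end

theory Submission
  imports Defs
begin

text \<open>Raising the price of service i changes the buyer's surplus only on bundles containing i.
  Under (1), once i \<in> X p is priced above p i, every bundle containing i falls strictly below
  an optimal bundle without i, so i is dropped; under (2), once i \<notin> X p asks a positive price,
  every bundle containing i falls strictly below X p. Conversely, at an equilibrium a seller in
  X p could otherwise raise her price by half the gap to the best bundle without i, and a seller
  outside X p could charge half the excess surplus of a bundle violating (2).\<close>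

lemma psum_fun_upd_notin: "i \<notin> U \<Longrightarrow> psum (p(i := q)) U = psum p U"
  unfolding psum_def by (rule sum.cong) auto

lemma psum_fun_upd_in:
  fixes U :: "'n::finite set"
  assumes "i \<in> U"
  shows "psum (p(i := q)) U = psum p (U - {i}) + q"
proof -
  have "psum (p(i := q)) U = q + psum (p(i := q)) (U - {i})"
    unfolding psum_def using assms by (simp add: sum.remove)
  also have "psum (p(i := q)) (U - {i}) = psum p (U - {i})"
    by (rule psum_fun_upd_notin) simp
  finally show ?thesis by (simp only: add.commute)
qed

lemma psum_remove:
  fixes U :: "'n::finite set"
  assumes "i \<in> U"
  shows "psum p U = psum p (U - {i}) + p i"
  using psum_fun_upd_in[OF assms, of p "p i"] by simp

lemma nonneg_prices_fun_upd: "nonneg_prices p \<Longrightarrow> 0 \<le> q \<Longrightarrow> nonneg_prices (p(i := q))"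
  unfolding nonneg_prices_def by auto

lemma decision_map_optimal:
  assumes "decision_map v X" and "nonneg_prices p"
  shows "v T - psum p T \<le> v (X p) - psum p (X p)"
  using assms unfolding decision_map_def demand_def by simp

lemma decision_map_optimal_fun_upd:
  assumes "decision_map v X" and "nonneg_prices p" and "0 \<le> q"
  shows "v T - psum (p(i := q)) T \<le> v (X (p(i := q))) - psum (p(i := q)) (X (p(i := q)))"
  by (rule decision_map_optimal[OF assms(1) nonneg_prices_fun_upd[OF assms(2,3)]])

lemma pure_nashI:
  assumes "nonneg_prices p"
    and raise: "\<And>i q. i \<in> X p \<Longrightarrow> p i < q \<Longrightarrow> i \<notin> X (p(i := q))"
    and enter: "\<And>i q. i \<notin> X p \<Longrightarrow> 0 < q \<Longrightarrow> i \<notin> X (p(i := q))"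
  shows "pure_nash X p"
  unfolding pure_nash_def
proof (intro conjI allI impI)
  fix i and q :: real
  assume "0 \<le> q"
  have "0 \<le> p i" using assms(1) unfolding nonneg_prices_def by simp
  then show "seller_utility X (p(i := q)) i \<le> seller_utility X p i"
    using raise[of i q] enter[of i q] \<open>0 \<le> q\<close>
    unfolding seller_utility_def by (cases "i \<in> X p") force+
qed (fact assms(1))

lemma pure_nash_excludes:
  assumes "pure_nash X p" and "0 \<le> q" and "seller_utility X p i < q"
  shows "i \<notin> X (p(i := q))"
proof
  assume "i \<in> X (p(i := q))"
  then have "seller_utility X (p(i := q)) i = q" unfolding seller_utility_def by simp
  moreover have "seller_utility X (p(i := q)) i \<le> seller_utility X p i"
    using assms(1,2) unfolding pure_nash_def by blast
  ultimately show False using assms(3) by simp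
qed

lemma raise_price_drops_service:
  fixes v :: "'n::finite set \<Rightarrow> real"
  assumes X: "decision_map v X" and p: "nonneg_prices p"
    and iT: "i \<notin> T" and T_opt: "v (X p) - psum p (X p) = v T - psum p T"
    and q: "p i < q"
  shows "i \<notin> X (p(i := q))"
proof
  let ?W = "X (p(i := q))"
  assume iW: "i \<in> ?W"
  have "0 \<le> p i" using p unfolding nonneg_prices_def by simp
  with q have "0 \<le> q" by linarith
  have "v T - psum p T \<le> v ?W - psum p (?W - {i}) - q"
    using decision_map_optimal_fun_upd[OF X p \<open>0 \<le> q\<close>, of T i]
    by (simp add: psum_fun_upd_notin[OF iT] psum_fun_upd_in[OF iW])
  moreover have "v ?W - psum p ?W \<le> v T - psum p T"
    using decision_map_optimal[OF X p] T_opt by simp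
  ultimately show False using psum_remove[OF iW, of p] q by linarith
qed

lemma positive_price_excludes_service:
  fixes v :: "'n::finite set \<Rightarrow> real"
  assumes X: "decision_map v X" and p: "nonneg_prices p"
    and iS: "i \<notin> X p"
    and no_gain: "\<And>T. i \<in> T \<Longrightarrow> v T - psum p (T - {i}) \<le> v (X p) - psum p (X p)"
    and q: "0 < q"
  shows "i \<notin> X (p(i := q))"
proof
  let ?W = "X (p(i := q))"
  assume iW: "i \<in> ?W"
  have "v (X p) - psum p (X p) \<le> v ?W - psum p (?W - {i}) - q"
    using decision_map_optimal_fun_upd[OF X p less_imp_le[OF q], of "X p" i]
    by (simp add: psum_fun_upd_notin[OF iS] psum_fun_upd_in[OF iW])
  with no_gain[OF iW] q show False by linarith
qed

lemma pure_nash_optimal_bundle_without: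
  fixes v :: "'n::finite set \<Rightarrow> real"
  assumes X: "decision_map v X" and ne: "pure_nash X p" and iS: "i \<in> X p"
  shows "\<exists>T. i \<notin> T \<and> v (X p) - psum p (X p) = v T - psum p T"
proof -
  have p: "nonneg_prices p" using ne unfolding pure_nash_def by simp
  define u where "u = v (X p) - psum p (X p)"
  define M where "M = (\<lambda>T. v T - psum p T) ` {T. i \<notin> T}"
  have "finite M" "M \<noteq> {}" unfolding M_def by auto
  then have "Max M \<in> M" by (rule Max_in)
  then obtain T0 where T0: "i \<notin> T0" "Max M = v T0 - psum p T0"
    unfolding M_def by blast
  have M_bound: "v T - psum p T \<le> Max M" if "i \<notin> T" for T
    using \<open>finite M\<close> that unfolding M_def by (intro Max_ge) auto
  show ?thesis
  proof (rule ccontr)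
    assume "\<not> ?thesis"
    then have "Max M < u"
      using decision_map_optimal[OF X p, of T0] T0 unfolding u_def by fastforce
    define q where "q = p i + (u - Max M) / 2"
    have q_gap: "2 * q = 2 * p i + (u - Max M)" unfolding q_def by simp
    have "0 \<le> p i" using p unfolding nonneg_prices_def by simp
    then have q0: "0 \<le> q" using q_gap \<open>Max M < u\<close> by linarith
    let ?W = "X (p(i := q))"
    have iW: "i \<notin> ?W"
      using pure_nash_excludes[OF ne q0] iS \<open>Max M < u\<close>
      unfolding seller_utility_def using q_gap by simp
    have "v (X p) - psum p (X p - {i}) - q \<le> v ?W - psum p ?W"
      using decision_map_optimal_fun_upd[OF X p q0, of "X p" i]
      by (simp add: psum_fun_upd_in[OF iS] psum_fun_upd_notin[OF iW])
    then show False
      using M_bound[OF iW] psum_remove[OF iS, of p] q_gap \<open>Max M < u\<close>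
      unfolding u_def by linarith
  qed
qed

lemma pure_nash_no_gain_outside:
  fixes v :: "'n::finite set \<Rightarrow> real"
  assumes X: "decision_map v X" and ne: "pure_nash X p"
    and iS: "i \<notin> X p" and iT: "i \<in> T"
  shows "v T - psum p (T - {i}) \<le> v (X p) - psum p (X p)"
proof (rule ccontr)
  assume violated: "\<not> ?thesis"
  have p: "nonneg_prices p" using ne unfolding pure_nash_def by simp
  define u where "u = v (X p) - psum p (X p)"
  have gap: "u < v T - psum p (T - {i})" using violated unfolding u_def by simp
  define q where "q = (v T - psum p (T - {i}) - u) / 2"
  have "0 < q" using gap unfolding q_def by simp
  let ?W = "X (p(i := q))"
  have iW: "i \<notin> ?W"
    using pure_nash_excludes[OF ne less_imp_le[OF \<open>0 < q\<close>]] iS \<open>0 < q\<close>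
    unfolding seller_utility_def by simp
  have "v T - psum p (T - {i}) - q \<le> v ?W - psum p ?W"
    using decision_map_optimal_fun_upd[OF X p less_imp_le[OF \<open>0 < q\<close>], of T i]
    by (simp add: psum_fun_upd_in[OF iT] psum_fun_upd_notin[OF iW])
  moreover have "2 * q = v T - psum p (T - {i}) - u" unfolding q_def by simp
  ultimately show False
    using decision_map_optimal[OF X p, of ?W] \<open>0 < q\<close> unfolding u_def by linarith
qed

theorem mainTheorem1:
  fixes v :: "('n::finite) set \<Rightarrow> real"
    and X :: "('n \<Rightarrow> real) \<Rightarrow> 'n set"
    and p :: "'n \<Rightarrow> real"
  assumes "valuation v"
    and "decision_map v X"
    and "nonneg_prices p"
  defines "S \<equiv> X p"
  defines "C1 \<equiv> (\<forall>i\<in>S. \<exists>T. i \<notin> T \<and> v S - psum p S = v T - psum p T)"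
  defines "C2 \<equiv> (\<forall>i. i \<notin> S \<longrightarrow> (\<forall>T. i \<in> T \<longrightarrow> v T - psum p (T - {i}) \<le> v S - psum p S))"
  shows "(C1 \<and> C2 \<longrightarrow> pure_nash X p)
         \<and> (maximal_decision_map v X \<longrightarrow> (pure_nash X p \<longleftrightarrow> C1 \<and> C2))"
proof -
  have sufficient: "pure_nash X p" if "C1" "C2"
  proof (rule pure_nashI[OF assms(3)])
    fix i q assume "i \<in> X p" "p i < q"
    with \<open>C1\<close> obtain T where "i \<notin> T" "v S - psum p S = v T - psum p T"
      unfolding C1_def S_def by blast
    then show "i \<notin> X (p(i := q))"
      using raise_price_drops_service[OF assms(2,3)] \<open>p i < q\<close> unfolding S_def by blast
  next
    fix i and q :: real assume "i \<notin> X p" "0 < q"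
    then show "i \<notin> X (p(i := q))"
      using positive_price_excludes_service[OF assms(2,3)] \<open>C2\<close> unfolding C2_def S_def by blast
  qed
  have necessary: "C1 \<and> C2" if "pure_nash X p"
    using pure_nash_optimal_bundle_without[OF assms(2) that]
      pure_nash_no_gain_outside[OF assms(2) that]
    unfolding C1_def C2_def S_def by blast
  show ?thesis using sufficient necessary by blast
qed

end
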